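(* Let $b^*>0$, let $f$ be a real function that is three times differentiable on an open interval containing $[0,b^*]$, with $f'''$ Lebesgue integrable on $[0,b^*]$. Let $a,b\in[0,b^*]$ with $a<b$, let $\alpha\in[0,1]$, $m\in(0,1]$, and $q\ge 1$. If $|f'''|^q$ is $(\alpha,m)$-convex on $[0,b^*]$, then $$\left|\int_a^{mb}f(x)\,dx-\frac{mb-a}{6}\left[f(a)+4f\left(\frac{a+mb}{2}\right)+f(mb)\right]\right|\le\frac{(mb-a)^4}{1152}\left\{\left(\frac{12|f'''(a)|^q+m\,[2^\alpha(3+\alpha)(4+\alpha)-12]\,|f'''(b)|^q}{2^\alpha(3+\alpha)(4+\alpha)}\right)^{1/q}+\Bigl(C_\alpha|f'''(a)|^q+m\,(1-C_\alpha)\,|f'''(b)|^q\Bigr)^{1/q}\right\},$$ where $$C_\alpha=\frac{12\left[\alpha^2+11\alpha+34-2^{4+\alpha}(2-\alpha)\right]}{2^\alpha(1+\alpha)(2+\alpha)(3+\alpha)(4+\alpha)}.$$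
   Context: For $(\alpha,m)\in[0,1]^2$ and $b^*>0$, a function $g:[0,b^*]\to\mathbb{R}$ is called $(\alpha,m)$-convex on $[0,b^*]$ if for all $x,y\in[0,b^*]$ and $t\in[0,1]$, $$g(tx+m(1-t)y)\le t^\alpha g(x)+m(1-t^\alpha)g(y).$$ *)

theory Defs
  imports "HOL-Analysis.Analysis"
begin

text \<open>(alpha,m)-convexity of g on [0,bs]; t^alpha uses the convention 0^0 = 1 (Isabelle's powr has 0 powr 0 = 0).\<close>
definition alpha_m_convex_on :: "real \<Rightarrow> real \<Rightarrow> real \<Rightarrow> (real \<Rightarrow> real) \<Rightarrow> bool" where
  "alpha_m_convex_on \<alpha> m bs g \<longleftrightarrow>
     (\<forall>x\<in>{0..bs}. \<forall>y\<in>{0..bs}. \<forall>t\<in>{0..1::real}.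
        g (t * x + m * (1 - t) * y) \<le> (if t = 0 \<and> \<alpha> = 0 then 1 else t powr \<alpha>) * g x
              + m * (1 - (if t = 0 \<and> \<alpha> = 0 then 1 else t powr \<alpha>)) * g y)"

end

theory Submission
  imports Defs
begin

text \<open>
  Substituting x = a + s (mb - a) and integrating by parts three times against the Peano kernel
  k(s) = s^2 (1 - 2s) / 12 on [0, 1/2] and k(1 - s) on [1/2, 1] writes the Simpson error as
  (mb - a)^4 times the difference of the integrals of k(s) f'''(x) and k(1 - s) f'''(x).
  Since x = (1 - s) a + m s b, (\<alpha>,m)-convexity with t = 1 - s bounds |f'''(x)|^q by
  (1 - s)^\<alpha> |f'''(a)|^q + m (1 - (1 - s)^\<alpha>) |f'''(b)|^q. The power mean inequality for the
  weight k bounds each half by (\<integral>k)^(1 - 1/q) (\<integral>k |f'''|^q)^(1/q), and the constants are the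
  moments \<integral>k = 1/1152 and \<integral>k(s) (1 - s)^\<alpha> ds.
\<close>

lemma powr_le_tangent_line:
  fixes x \<mu> p :: real
  assumes "0 \<le> x" "0 < \<mu>" "0 < p" "p \<le> 1"
  shows "x powr p \<le> (1 - p) * \<mu> powr p + p * \<mu> powr (p - 1) * x"
proof (cases "x = 0")
  case True
  then show ?thesis using assms by simp
next
  case False
  have young: "x powr p * \<mu> powr (1 - p) \<le> p * x + (1 - p) * \<mu>"
    using Youngs_inequality_0[of p "1 - p" x \<mu>] assms False by simp
  have "x powr p = x powr p * \<mu> powr (1 - p) * \<mu> powr (p - 1)"
    using assms by (simp add: mult.assoc powr_add[symmetric])
  also have "\<dots> \<le> (p * x + (1 - p) * \<mu>) * \<mu> powr (p - 1)"
    using young by (intro mult_right_mono) auto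
  also have "\<dots> = (1 - p) * \<mu> powr p + p * \<mu> powr (p - 1) * x"
    using assms by (simp add: algebra_simps powr_mult_base)
  finally show ?thesis .
qed

lemma le_powr_of_tangent_bounds:
  fixes x R p :: real
  assumes tangent: "\<And>\<mu>. 0 < \<mu> \<Longrightarrow> x \<le> (1 - p) * \<mu> powr p + p * \<mu> powr (p - 1) * R"
    and "0 \<le> R" "0 < p" "p \<le> 1"
  shows "x \<le> R powr p"
proof (cases "R = 0")
  case False
  then have "R > 0" using assms by simp
  then have "R powr (p - 1) * R = R powr p"
    by (simp add: powr_add[symmetric] powr_mult_base mult.commute)
  then have "(1 - p) * R powr p + p * R powr (p - 1) * R = R powr p"
    by (simp only: mult.assoc) (simp add: left_diff_distrib)
  then show ?thesis
    using tangent[OF \<open>R > 0\<close>] by simp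
next
  case R0: True
  show ?thesis
  proof (rule ccontr)
    assume "\<not> x \<le> R powr p"
    then have x: "x > 0" using R0 by simp
    have "x \<le> (1 - p) * x"
      using tangent[of "x powr (1/p)"] x R0 assms by (simp add: powr_powr)
    then show False using x assms by (simp add: mult_le_cancel_right1)
  qed
qed

text \<open>Jensen's inequality for the concave power x \<mapsto> x^(1/q) and the weight k: every tangent line of
  the power gives a pointwise affine bound, which can be integrated without knowing that
  |F|^q is integrable.\<close>
lemma has_integral_power_mean_le:
  fixes k F G :: "'a::euclidean_space \<Rightarrow> real"
  assumes I: "((\<lambda>s. k s * F s) has_integral I) S"
    and W: "(k has_integral W) S" "0 < W"
    and J: "((\<lambda>s. k s * G s) has_integral J) S"
    and q: "1 \<le> q"
    and k_nonneg: "\<And>s. s \<in> S \<Longrightarrow> 0 \<le> k s"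
    and F_le: "\<And>s. s \<in> S \<Longrightarrow> k s \<noteq> 0 \<Longrightarrow> \<bar>F s\<bar> powr q \<le> G s"
  shows "\<bar>I\<bar> \<le> W * (J / W) powr (1/q)"
proof -
  define p where "p = 1/q"
  have p: "0 < p" "p \<le> 1" using q by (auto simp: p_def)
  have "0 \<le> J"
  proof (rule has_integral_nonneg[OF J])
    fix s assume "s \<in> S"
    then show "0 \<le> k s * G s"
      using k_nonneg F_le[of s] order_trans[OF powr_ge_zero] by (cases "k s = 0") auto
  qed
  have "\<bar>I\<bar> / W \<le> (1 - p) * \<mu> powr p + p * \<mu> powr (p - 1) * (J / W)" if "0 < \<mu>" for \<mu>
  proof -
    define c\<^sub>1 c\<^sub>2 where "c\<^sub>1 = (1 - p) * \<mu> powr p" and "c\<^sub>2 = p * \<mu> powr (p - 1)"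
    have "0 \<le> c\<^sub>2" using p by (simp add: c\<^sub>2_def)
    have bound: "norm (k s * F s) \<le> c\<^sub>1 * k s + c\<^sub>2 * (k s * G s)" if s: "s \<in> S" for s
    proof (cases "k s = 0")
      case False
      have "\<bar>F s\<bar> = (\<bar>F s\<bar> powr q) powr p"
        using q by (simp add: powr_powr p_def)
      also have "\<dots> \<le> c\<^sub>1 + c\<^sub>2 * \<bar>F s\<bar> powr q"
        using powr_le_tangent_line[of "\<bar>F s\<bar> powr q" \<mu> p] \<open>0 < \<mu>\<close> p
        by (simp add: c\<^sub>1_def c\<^sub>2_def)
      also have "\<dots> \<le> c\<^sub>1 + c\<^sub>2 * G s"
        using F_le[OF s False] \<open>0 \<le> c\<^sub>2\<close> by (simp add: mult_left_mono)
      finally have "k s * \<bar>F s\<bar> \<le> k s * (c\<^sub>1 + c\<^sub>2 * G s)"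
        using k_nonneg[OF s] by (simp add: mult_left_mono)
      then show ?thesis using k_nonneg[OF s] by (simp add: abs_mult algebra_simps)
    qed simp
    have "((\<lambda>s. c\<^sub>1 * k s + c\<^sub>2 * (k s * G s)) has_integral (c\<^sub>1 * W + c\<^sub>2 * J)) S"
      by (intro has_integral_add has_integral_mult_right W J)
    then have "norm I \<le> (c\<^sub>1 * W + c\<^sub>2 * J) \<bullet> 1"
      by (rule has_integral_norm_bound_integral_component[OF I]) (use bound in simp)
    then have "\<bar>I\<bar> \<le> c\<^sub>1 * W + c\<^sub>2 * J" by simp
    then have "\<bar>I\<bar> / W \<le> (c\<^sub>1 * W + c\<^sub>2 * J) / W"
      using W(2) by (simp add: divide_right_mono)
    also have "\<dots> = c\<^sub>1 + c\<^sub>2 * (J / W)"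
      using W(2) by (simp add: add_divide_distrib)
    finally show ?thesis by (simp add: c\<^sub>1_def c\<^sub>2_def)
  qed
  then have "\<bar>I\<bar> / W \<le> (J / W) powr p"
    using le_powr_of_tangent_bounds \<open>0 \<le> J\<close> W(2) p by simp
  then show ?thesis
    using W(2) by (simp add: p_def divide_le_eq mult.commute)
qed

lemma has_integral_power_mean_le_affine:
  fixes k F T :: "'a::euclidean_space \<Rightarrow> real"
  assumes I: "((\<lambda>s. k s * F s) has_integral I) S"
    and W: "(k has_integral W) S" "0 < W"
    and T: "((\<lambda>s. k s * T s) has_integral W * P) S"
    and q: "1 \<le> q"
    and k_nonneg: "\<And>s. s \<in> S \<Longrightarrow> 0 \<le> k s"
    and F_le: "\<And>s. s \<in> S \<Longrightarrow> k s \<noteq> 0 \<Longrightarrow> \<bar>F s\<bar> powr q \<le> T s * A + m * (1 - T s) * B"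
  shows "\<bar>I\<bar> \<le> W * (P * A + m * (1 - P) * B) powr (1/q)"
proof -
  have "((\<lambda>s. A * (k s * T s) + (m * B) * k s - (m * B) * (k s * T s)) has_integral
          (A * (W * P) + (m * B) * W - (m * B) * (W * P))) S"
    by (intro has_integral_diff has_integral_add has_integral_mult_right W T)
  then have "((\<lambda>s. k s * (T s * A + m * (1 - T s) * B)) has_integral
          W * (P * A + m * (1 - P) * B)) S"
    by (simp add: algebra_simps)
  from has_integral_power_mean_le[OF I W this q k_nonneg F_le] W(2) show ?thesis
    by simp
qed

lemma has_integral_one_minus_powr:
  fixes r lo hi :: real
  assumes r: "-1 < r" and "lo \<le> hi" "hi \<le> 1"
  shows "((\<lambda>s. (1 - s) powr r) has_integral
           ((1 - lo) powr (r + 1) - (1 - hi) powr (r + 1)) / (r + 1)) {lo..hi}"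
proof -
  define P where "P s = - ((1 - s) powr (r + 1) / (r + 1))" for s :: real
  have "((\<lambda>s. (1 - s) powr r) has_integral (P hi - P lo)) {lo..hi}"
  proof (rule fundamental_theorem_of_calculus_interior)
    show "continuous_on {lo..hi} P"
      unfolding P_def using assms by (intro continuous_intros continuous_on_powr') auto
  next
    fix s assume "s \<in> {lo<..<hi}"
    then have "0 < 1 - s" using assms by simp
    then have "(P has_real_derivative - ((r + 1) * (1 - s) powr (r + 1 - 1) * (- 1) / (r + 1))) (at s)"
      unfolding P_def using r by (intro derivative_eq_intros DERIV_chain2[OF has_real_derivative_powr]) auto
    then show "(P has_vector_derivative (1 - s) powr r) (at s)"
      using r by (simp add: has_real_derivative_iff_has_vector_derivative)
  qed (use assms in simp)
  then show ?thesis by (simp add: P_def diff_divide_distrib)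
qed

text \<open>The Peano kernel of Simpson's rule on [0, 1] is simpson_kernel s on [0, 1/2] and
  simpson_kernel (1 - s) on [1/2, 1].\<close>
definition simpson_kernel :: "real \<Rightarrow> real" where
  "simpson_kernel s = s^2 * (1 - 2 * s) / 12"

lemma simpson_kernel_nonneg: "0 \<le> s \<Longrightarrow> s \<le> 1/2 \<Longrightarrow> 0 \<le> simpson_kernel s"
  by (simp add: simpson_kernel_def)

definition simpson_kernel_moment :: "real \<Rightarrow> real" where
  "simpson_kernel_moment \<alpha> = 12 * (\<alpha>^2 + 11 * \<alpha> + 34 - 2 powr (4 + \<alpha>) * (2 - \<alpha>)) /
     (2 powr \<alpha> * (1 + \<alpha>) * (2 + \<alpha>) * (3 + \<alpha>) * (4 + \<alpha>))"

definition simpson_kernel_reflected_moment :: "real \<Rightarrow> real" where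
  "simpson_kernel_reflected_moment \<alpha> = 12 / (2 powr \<alpha> * (3 + \<alpha>) * (4 + \<alpha>))"

lemma simpson_kernel_powr_moment:
  fixes \<alpha> :: real
  assumes "-1 < \<alpha>"
  shows "((\<lambda>s. simpson_kernel s * (1 - s) powr \<alpha>) has_integral simpson_kernel_moment \<alpha> / 1152)
           {0..1/2}"
proof -
  define v where "v j = (1 - (1/2) powr (\<alpha> + j + 1)) / (\<alpha> + j + 1)" for j :: real
  have v: "((\<lambda>s. (1 - s) powr (\<alpha> + j)) has_integral v j) {0..1/2}" if "0 \<le> j" for j
    using has_integral_one_minus_powr[of "\<alpha> + j" 0 "1/2"] that assms by (simp add: v_def)
  have integral: "((\<lambda>s. (2 * (1 - s) powr (\<alpha> + 3) - 5 * (1 - s) powr (\<alpha> + 2)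
                + 4 * (1 - s) powr (\<alpha> + 1) - (1 - s) powr (\<alpha> + 0)) / 12)
         has_integral (2 * v 3 - 5 * v 2 + 4 * v 1 - v 0) / 12) {0..1/2}" (is "(?f has_integral _) _")
    by (intro has_integral_divide has_integral_diff has_integral_add has_integral_mult_right v) auto
  have integrand: "?f s = simpson_kernel s * (1 - s) powr \<alpha>" if "s \<in> {0..1/2}" for s
  proof -
    have "0 < 1 - s" using that by simp
    then show ?thesis
      by (simp add: simpson_kernel_def powr_add powr_numeral algebra_simps power2_eq_square power3_eq_cube)
  qed
  have integral_value: "(2 * v 3 - 5 * v 2 + 4 * v 1 - v 0) / 12 =
           12 * (\<alpha>^2 + 11 * \<alpha> + 34 - 2 powr (4 + \<alpha>) * (2 - \<alpha>)) /
           (2 powr \<alpha> * (1 + \<alpha>) * (2 + \<alpha>) * (3 + \<alpha>) * (4 + \<alpha>)) / 1152"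
  proof -
    define X where "X = (2::real) powr \<alpha>"
    have X: "0 < X" by (simp add: X_def)
    have half: "(1/2 :: real) powr (\<alpha> + j + 1) = 1 / (2 powr (j + 1) * X)" for j
      by (simp add: X_def powr_add powr_divide)
    have pow: "(2::real) powr (4 + \<alpha>) = 16 * X" by (simp add: X_def powr_add)
    txt \<open>Opaque names for the shifts \<alpha> + j keep field_simps from multiplying them out.\<close>
    obtain b\<^sub>1 b\<^sub>2 b\<^sub>3 b\<^sub>4 where
      b: "b\<^sub>1 = \<alpha> + 1" "b\<^sub>2 = \<alpha> + 2" "b\<^sub>3 = \<alpha> + 3" "b\<^sub>4 = \<alpha> + 4" by simp
    then have b_pos: "0 < b\<^sub>1" "0 < b\<^sub>2" "0 < b\<^sub>3" "0 < b\<^sub>4" using assms by auto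
    have b': "1 + \<alpha> = b\<^sub>1" "2 + \<alpha> = b\<^sub>2" "3 + \<alpha> = b\<^sub>3" "4 + \<alpha> = b\<^sub>4" using b by auto
    have "(2 * v 3 - 5 * v 2 + 4 * v 1 - v 0) / 12
        = (2 * (1 - 1/(16*X)) / b\<^sub>4 - 5 * (1 - 1/(8*X)) / b\<^sub>3
           + 4 * (1 - 1/(4*X)) / b\<^sub>2 - (1 - 1/(2*X)) / b\<^sub>1) / 12"
      unfolding v_def half b by (simp add: add.assoc)
    also have "\<dots> = 12 * (\<alpha>^2 + 11 * \<alpha> + 34 - 16 * X * (2 - \<alpha>)) / (X * b\<^sub>1 * b\<^sub>2 * b\<^sub>3 * b\<^sub>4) / 1152"
      using b_pos X by (simp add: field_simps) (simp add: b power2_eq_square; algebra)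
    finally show ?thesis
      unfolding pow unfolding X_def[symmetric] b' by this
  qed
  show ?thesis
    using has_integral_eq[OF integrand integral]
    unfolding integral_value simpson_kernel_moment_def simpson_kernel_reflected_moment_def .
qed

lemma simpson_kernel_reflected_powr_moment:
  fixes \<alpha> :: real
  assumes "-3 < \<alpha>"
  shows "((\<lambda>s. simpson_kernel (1 - s) * (1 - s) powr \<alpha>) has_integral
           simpson_kernel_reflected_moment \<alpha> / 1152) {1/2..1}"
proof -
  define w where "w j = (1/2) powr (\<alpha> + j + 1) / (\<alpha> + j + 1)" for j :: real
  have w: "((\<lambda>s. (1 - s) powr (\<alpha> + j)) has_integral w j) {1/2..1}" if "2 \<le> j" for j
    using has_integral_one_minus_powr[of "\<alpha> + j" "1/2" 1] that assms by (simp add: w_def)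
  have integral: "((\<lambda>s. ((1 - s) powr (\<alpha> + 2) - 2 * (1 - s) powr (\<alpha> + 3)) / 12)
         has_integral (w 2 - 2 * w 3) / 12) {1/2..1}" (is "(?f has_integral _) _")
    by (intro has_integral_divide has_integral_diff has_integral_mult_right w) auto
  have integrand: "?f s = simpson_kernel (1 - s) * (1 - s) powr \<alpha>" if "s \<in> {1/2..1}" for s
  proof (cases "s = 1")
    case False
    then have "0 < 1 - s" using that by simp
    then show ?thesis
      by (simp add: simpson_kernel_def powr_add powr_numeral algebra_simps power2_eq_square power3_eq_cube)
  qed (simp add: simpson_kernel_def)
  have integral_value: "(w 2 - 2 * w 3) / 12 = 12 / (2 powr \<alpha> * (3 + \<alpha>) * (4 + \<alpha>)) / 1152"
  proof -
    define X where "X = (2::real) powr \<alpha>"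
    have X: "0 < X" by (simp add: X_def)
    have half: "(1/2 :: real) powr (\<alpha> + j + 1) = 1 / (2 powr (j + 1) * X)" for j
      by (simp add: X_def powr_add powr_divide)
    obtain b\<^sub>3 b\<^sub>4 where b: "b\<^sub>3 = \<alpha> + 3" "b\<^sub>4 = \<alpha> + 4" by simp
    then have b_pos: "0 < b\<^sub>3" "0 < b\<^sub>4" using assms by auto
    have b': "3 + \<alpha> = b\<^sub>3" "4 + \<alpha> = b\<^sub>4" using b by auto
    have "(w 2 - 2 * w 3) / 12 = (1 / (8 * X) / b\<^sub>3 - 2 * (1 / (16 * X)) / b\<^sub>4) / 12"
      unfolding w_def half b by (simp add: add.assoc)
    also have "\<dots> = 12 / (X * b\<^sub>3 * b\<^sub>4) / 1152"
      using b_pos X by (simp add: field_simps) (simp add: b)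
    finally show ?thesis
      unfolding X_def[symmetric] b' by this
  qed
  show ?thesis
    using has_integral_eq[OF integrand integral]
    unfolding integral_value simpson_kernel_moment_def simpson_kernel_reflected_moment_def .
qed

lemma simpson_kernel_has_integral: "(simpson_kernel has_integral 1/1152) {0..1/2}"
proof -
  have "((\<lambda>s. simpson_kernel s * (1 - s) powr 0) has_integral 1/1152) {0..1/2}"
    using simpson_kernel_powr_moment[of 0] by (simp add: simpson_kernel_moment_def)
  then show ?thesis
    by (rule has_integral_eq[rotated]) simp
qed

lemma simpson_kernel_reflected_has_integral:
  "((\<lambda>s. simpson_kernel (1 - s)) has_integral 1/1152) {1/2..1}"
proof -
  have "((\<lambda>s. simpson_kernel (1 - s) * (1 - s) powr 0) has_integral 1/1152) {1/2..1}"
    using simpson_kernel_reflected_powr_moment[of 0] by (simp add: simpson_kernel_reflected_moment_def)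
  moreover have "((\<lambda>s. simpson_kernel (1 - s) * (1 - s) powr 0) has_integral 1/1152) {1/2..1}
      \<longleftrightarrow> ((\<lambda>s. simpson_kernel (1 - s)) has_integral 1/1152) {1/2..1}"
    by (rule has_integral_spike_finite_eq[of "{1}"]) auto
  ultimately show ?thesis by simp
qed

lemma has_integral_times_third_derivative:
  fixes p p' p'' g g' g'' g''' :: "real \<Rightarrow> real" and c lo hi I :: real
  assumes "lo \<le> hi"
    and p: "\<And>s. s \<in> {lo..hi} \<Longrightarrow> (p has_real_derivative p' s) (at s)"
      "\<And>s. s \<in> {lo..hi} \<Longrightarrow> (p' has_real_derivative p'' s) (at s)"
      "\<And>s. s \<in> {lo..hi} \<Longrightarrow> (p'' has_real_derivative c) (at s)"
    and g: "\<And>s. s \<in> {lo..hi} \<Longrightarrow> (g has_real_derivative g' s) (at s)"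
      "\<And>s. s \<in> {lo..hi} \<Longrightarrow> (g' has_real_derivative g'' s) (at s)"
      "\<And>s. s \<in> {lo..hi} \<Longrightarrow> (g'' has_real_derivative g''' s) (at s)"
    and I: "(g has_integral I) {lo..hi}"
  shows "((\<lambda>s. p s * g''' s) has_integral
           (p hi * g'' hi - p' hi * g' hi + p'' hi * g hi)
           - (p lo * g'' lo - p' lo * g' lo + p'' lo * g lo) - c * I) {lo..hi}"
proof -
  define \<Phi> where "\<Phi> s = p s * g'' s - p' s * g' s + p'' s * g s" for s
  have "((\<lambda>s. p s * g''' s + c * g s) has_integral (\<Phi> hi - \<Phi> lo)) {lo..hi}"
  proof (rule fundamental_theorem_of_calculus[OF \<open>lo \<le> hi\<close>])
    fix s assume s: "s \<in> {lo..hi}"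
    have "(\<Phi> has_real_derivative
            (p' s * g'' s + g''' s * p s) - (p'' s * g' s + g'' s * p' s) + (c * g s + g' s * p'' s)) (at s)"
      unfolding \<Phi>_def by (intro DERIV_add DERIV_diff DERIV_mult p g s)
    then show "(\<Phi> has_vector_derivative p s * g''' s + c * g s) (at s within {lo..hi})"
      by (simp add: has_real_derivative_iff_has_vector_derivative[symmetric] has_field_derivative_at_within algebra_simps)
  qed
  from has_integral_diff[OF this has_integral_mult_right[OF I, of c]] show ?thesis
    by (simp add: \<Phi>_def)
qed

lemma simpson_rule_peano_kernel:
  fixes g g' g'' g''' :: "real \<Rightarrow> real" and I :: real
  assumes g: "\<And>s. s \<in> {0..1} \<Longrightarrow> (g has_real_derivative g' s) (at s)"
      "\<And>s. s \<in> {0..1} \<Longrightarrow> (g' has_real_derivative g'' s) (at s)"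
      "\<And>s. s \<in> {0..1} \<Longrightarrow> (g'' has_real_derivative g''' s) (at s)"
    and I: "(g has_integral I) {0..1}"
  obtains V\<^sub>1 V\<^sub>2 where "((\<lambda>s. simpson_kernel s * g''' s) has_integral V\<^sub>1) {0..1/2}"
    and "((\<lambda>s. simpson_kernel (1 - s) * g''' s) has_integral V\<^sub>2) {1/2..1}"
    and "I - (g 0 + 4 * g (1/2) + g 1) / 6 = V\<^sub>1 - V\<^sub>2"
proof -
  have "g integrable_on {0..1/2}" "g integrable_on {1/2..1}"
    using I by (auto intro: integrable_subinterval_real)
  then obtain I\<^sub>1 I\<^sub>2 where I\<^sub>1: "(g has_integral I\<^sub>1) {0..1/2}" and I\<^sub>2: "(g has_integral I\<^sub>2) {1/2..1}"
    by blast
  have "I = I\<^sub>1 + I\<^sub>2"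
    using has_integral_unique[OF I has_integral_combine[OF _ _ I\<^sub>1 I\<^sub>2]] by simp
  have left: "((\<lambda>s. simpson_kernel s * g''' s) has_integral
      (simpson_kernel (1/2) * g'' (1/2) - (1/2 - 3 * (1/2)^2) / 6 * g' (1/2) + (1 - 6 * (1/2)) / 6 * g (1/2))
      - (simpson_kernel 0 * g'' 0 - (0 - 3 * 0^2) / 6 * g' 0 + (1 - 6 * 0) / 6 * g 0) - (-1) * I\<^sub>1) {0..1/2}"
    by (rule has_integral_times_third_derivative[OF _ _ _ _ g I\<^sub>1])
       (auto intro!: derivative_eq_intros simp: simpson_kernel_def field_simps power2_eq_square)
  have right: "((\<lambda>s. simpson_kernel (1 - s) * g''' s) has_integral
      (simpson_kernel (1 - 1) * g'' 1 - (- ((1 - 1) - 3 * (1 - 1)^2) / 6) * g' 1 + (1 - 6 * (1 - 1)) / 6 * g 1)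
      - (simpson_kernel (1 - 1/2) * g'' (1/2) - (- ((1 - 1/2) - 3 * (1 - 1/2)^2) / 6) * g' (1/2)
         + (1 - 6 * (1 - 1/2)) / 6 * g (1/2)) - 1 * I\<^sub>2) {1/2..1}"
    by (rule has_integral_times_third_derivative[OF _ _ _ _ g I\<^sub>2])
       (auto intro!: derivative_eq_intros simp: simpson_kernel_def field_simps power2_eq_square)
  show ?thesis
    by (rule that[OF left right]) (simp add: \<open>I = I\<^sub>1 + I\<^sub>2\<close> simpson_kernel_def field_simps)
qed

lemma simpson_rule_error_peano:
  fixes f f' f'' f''' :: "real \<Rightarrow> real" and x\<^sub>0 x\<^sub>1 :: real
  assumes "x\<^sub>0 \<noteq> x\<^sub>1"
    and f: "\<And>x. x \<in> closed_segment x\<^sub>0 x\<^sub>1 \<Longrightarrow> (f has_real_derivative f' x) (at x)"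
      "\<And>x. x \<in> closed_segment x\<^sub>0 x\<^sub>1 \<Longrightarrow> (f' has_real_derivative f'' x) (at x)"
      "\<And>x. x \<in> closed_segment x\<^sub>0 x\<^sub>1 \<Longrightarrow> (f'' has_real_derivative f''' x) (at x)"
  obtains V\<^sub>1 V\<^sub>2 where
    "((\<lambda>s. simpson_kernel s * f''' (x\<^sub>0 + s * (x\<^sub>1 - x\<^sub>0))) has_integral V\<^sub>1) {0..1/2}"
    and "((\<lambda>s. simpson_kernel (1 - s) * f''' (x\<^sub>0 + s * (x\<^sub>1 - x\<^sub>0))) has_integral V\<^sub>2) {1/2..1}"
    and "(LBINT x=x\<^sub>0..x\<^sub>1. f x) - (x\<^sub>1 - x\<^sub>0) / 6 * (f x\<^sub>0 + 4 * f ((x\<^sub>0 + x\<^sub>1) / 2) + f x\<^sub>1)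
           = (x\<^sub>1 - x\<^sub>0)^4 * (V\<^sub>1 - V\<^sub>2)"
proof -
  define h where "h = x\<^sub>1 - x\<^sub>0"
  define \<phi> where "\<phi> s = x\<^sub>0 + s * h" for s
  have h: "h^4 \<noteq> 0" using assms(1) by (simp add: h_def)
  have \<phi>_segment: "\<phi> s \<in> closed_segment x\<^sub>0 x\<^sub>1" if "s \<in> {0..1}" for s
    using that unfolding in_segment \<phi>_def h_def by (intro exI[of _ s]) (auto simp: algebra_simps)
  have \<phi>: "(\<phi> has_real_derivative h) (at s)" for s
    unfolding \<phi>_def by (auto intro!: derivative_eq_intros)
  have chain: "((\<lambda>s. h^k * F (\<phi> s)) has_real_derivative h^(Suc k) * F' (\<phi> s)) (at s)"
    if "\<And>x. x \<in> closed_segment x\<^sub>0 x\<^sub>1 \<Longrightarrow> (F has_real_derivative F' x) (at x)" "s \<in> {0..1}"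
    for F F' :: "real \<Rightarrow> real" and k s
    using DERIV_cmult[OF DERIV_chain2[OF that(1)[OF \<phi>_segment[OF that(2)]] \<phi>], of "h^k"]
    by (simp add: ac_simps)
  have g: "\<And>s. s \<in> {0..1} \<Longrightarrow> ((\<lambda>s. h * f (\<phi> s)) has_real_derivative h^2 * f' (\<phi> s)) (at s)"
      "\<And>s. s \<in> {0..1} \<Longrightarrow> ((\<lambda>s. h^2 * f' (\<phi> s)) has_real_derivative h^3 * f'' (\<phi> s)) (at s)"
      "\<And>s. s \<in> {0..1} \<Longrightarrow> ((\<lambda>s. h^3 * f'' (\<phi> s)) has_real_derivative h^4 * f''' (\<phi> s)) (at s)"
    using chain[OF f(1), where k=1] chain[OF f(2), where k=2] chain[OF f(3), where k=3] by (simp_all add: power2_eq_square)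
  have g_cont: "continuous_on {0..1} (\<lambda>s. h * f (\<phi> s))"
    using g(1) by (meson DERIV_isCont continuous_at_imp_continuous_on)
  have "continuous_on (closed_segment x\<^sub>0 x\<^sub>1) f"
    using f(1) by (meson DERIV_isCont continuous_at_imp_continuous_on)
  then have "continuous_on (\<phi> ` {0..1}) f"
    by (rule continuous_on_subset) (use \<phi>_segment in auto)
  then have "(LBINT x=x\<^sub>0..x\<^sub>1. f x) = (LBINT s=0..1. h *\<^sub>R f (\<phi> s))"
    using interval_integral_substitution_finite[of 0 1 \<phi> "\<lambda>_. h" f] \<phi>
    by (simp add: \<phi>_def h_def has_field_derivative_at_within zero_ereal_def one_ereal_def)
  also have "\<dots> = integral {0..1} (\<lambda>s. h * f (\<phi> s))"
    using interval_integral_eq_integral[OF _ borel_integrable_atLeastAtMost'[OF g_cont]] by (simp add: zero_ereal_def one_ereal_def)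
  finally have "((\<lambda>s. h * f (\<phi> s)) has_integral (LBINT x=x\<^sub>0..x\<^sub>1. f x)) {0..1}"
    using integrable_continuous_interval[OF g_cont] by (simp add: has_integral_integral)
  from simpson_rule_peano_kernel[OF g this] obtain W\<^sub>1 W\<^sub>2 where
    W\<^sub>1: "((\<lambda>s. simpson_kernel s * (h^4 * f''' (\<phi> s))) has_integral W\<^sub>1) {0..1/2}" and
    W\<^sub>2: "((\<lambda>s. simpson_kernel (1 - s) * (h^4 * f''' (\<phi> s))) has_integral W\<^sub>2) {1/2..1}" and
    E: "(LBINT x=x\<^sub>0..x\<^sub>1. f x) - (h * f (\<phi> 0) + 4 * (h * f (\<phi> (1/2))) + h * f (\<phi> 1)) / 6 = W\<^sub>1 - W\<^sub>2" .
  have "((\<lambda>s. h^4 * (simpson_kernel s * f''' (\<phi> s))) has_integral W\<^sub>1) {0..1/2}"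
    "((\<lambda>s. h^4 * (simpson_kernel (1 - s) * f''' (\<phi> s))) has_integral W\<^sub>2) {1/2..1}"
    using W\<^sub>1 W\<^sub>2 by (simp_all only: mult.left_commute)
  then have V: "((\<lambda>s. simpson_kernel s * f''' (\<phi> s)) has_integral W\<^sub>1 / h^4) {0..1/2}"
    "((\<lambda>s. simpson_kernel (1 - s) * f''' (\<phi> s)) has_integral W\<^sub>2 / h^4) {1/2..1}"
    unfolding has_integral_mult_right_iff[OF h] .
  have "h / 6 * (f x\<^sub>0 + 4 * f ((x\<^sub>0 + x\<^sub>1) / 2) + f x\<^sub>1)
      = (h * f (\<phi> 0) + 4 * (h * f (\<phi> (1/2))) + h * f (\<phi> 1)) / 6"
    by (simp add: \<phi>_def h_def field_simps)
  moreover have "h^4 * (W\<^sub>1 / h^4 - W\<^sub>2 / h^4) = W\<^sub>1 - W\<^sub>2"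
    using h by (simp add: right_diff_distrib)
  ultimately have "(LBINT x=x\<^sub>0..x\<^sub>1. f x) - h / 6 * (f x\<^sub>0 + 4 * f ((x\<^sub>0 + x\<^sub>1) / 2) + f x\<^sub>1)
      = h^4 * (W\<^sub>1 / h^4 - W\<^sub>2 / h^4)"
    using E by simp
  with V show ?thesis
    unfolding \<phi>_def h_def by (rule that)
qed

lemma simpson_kernel_integrals_bound:
  fixes F :: "real \<Rightarrow> real" and \<alpha> q m A B V\<^sub>1 V\<^sub>2 :: real
  assumes V\<^sub>1: "((\<lambda>s. simpson_kernel s * F s) has_integral V\<^sub>1) {0..1/2}"
    and V\<^sub>2: "((\<lambda>s. simpson_kernel (1 - s) * F s) has_integral V\<^sub>2) {1/2..1}"
    and \<alpha>: "-1 < \<alpha>" and q: "1 \<le> q"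
    and F_le: "\<And>s. 0 \<le> s \<Longrightarrow> s < 1 \<Longrightarrow>
      \<bar>F s\<bar> powr q \<le> (1 - s) powr \<alpha> * A + m * (1 - (1 - s) powr \<alpha>) * B"
  shows "\<bar>V\<^sub>1 - V\<^sub>2\<bar> \<le>
    ((simpson_kernel_moment \<alpha> * A + m * (1 - simpson_kernel_moment \<alpha>) * B) powr (1/q)
     + (simpson_kernel_reflected_moment \<alpha> * A + m * (1 - simpson_kernel_reflected_moment \<alpha>) * B)
         powr (1/q)) / 1152"
proof -
  have "\<bar>V\<^sub>1\<bar> \<le> 1/1152 * (simpson_kernel_moment \<alpha> * A + m * (1 - simpson_kernel_moment \<alpha>) * B) powr (1/q)"
  proof (rule has_integral_power_mean_le_affine[OF V\<^sub>1 simpson_kernel_has_integral _ _ q])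
    show "((\<lambda>s. simpson_kernel s * (1 - s) powr \<alpha>) has_integral 1/1152 * simpson_kernel_moment \<alpha>) {0..1/2}"
      using simpson_kernel_powr_moment[OF \<alpha>] by simp
  qed (auto intro: simpson_kernel_nonneg F_le)
  moreover have "\<bar>V\<^sub>2\<bar> \<le> 1/1152 * (simpson_kernel_reflected_moment \<alpha> * A
      + m * (1 - simpson_kernel_reflected_moment \<alpha>) * B) powr (1/q)"
  proof (rule has_integral_power_mean_le_affine[OF V\<^sub>2 simpson_kernel_reflected_has_integral _ _ q])
    show "((\<lambda>s. simpson_kernel (1 - s) * (1 - s) powr \<alpha>) has_integral
        1/1152 * simpson_kernel_reflected_moment \<alpha>) {1/2..1}"
      using simpson_kernel_reflected_powr_moment[of \<alpha>] \<alpha> by simp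
  next
    fix s assume "s \<in> {1/2..1}" "simpson_kernel (1 - s) \<noteq> 0"
    then show "\<bar>F s\<bar> powr q \<le> (1 - s) powr \<alpha> * A + m * (1 - (1 - s) powr \<alpha>) * B"
      by (intro F_le) (auto simp: simpson_kernel_def)
  qed (auto intro: simpson_kernel_nonneg)
  ultimately show ?thesis
    using abs_triangle_ineq4[of V\<^sub>1 V\<^sub>2] by simp
qed

lemma simpson_rule_error_le:
  fixes f f' f'' f''' :: "real \<Rightarrow> real" and x\<^sub>0 x\<^sub>1 \<alpha> q m A B :: real
  assumes f: "\<And>x. x \<in> closed_segment x\<^sub>0 x\<^sub>1 \<Longrightarrow> (f has_real_derivative f' x) (at x)"
      "\<And>x. x \<in> closed_segment x\<^sub>0 x\<^sub>1 \<Longrightarrow> (f' has_real_derivative f'' x) (at x)"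
      "\<And>x. x \<in> closed_segment x\<^sub>0 x\<^sub>1 \<Longrightarrow> (f'' has_real_derivative f''' x) (at x)"
    and \<alpha>: "-1 < \<alpha>" and q: "1 \<le> q"
    and f'''_le: "\<And>s. 0 \<le> s \<Longrightarrow> s < 1 \<Longrightarrow>
      \<bar>f''' (x\<^sub>0 + s * (x\<^sub>1 - x\<^sub>0))\<bar> powr q \<le> (1 - s) powr \<alpha> * A + m * (1 - (1 - s) powr \<alpha>) * B"
  shows "\<bar>(LBINT x=x\<^sub>0..x\<^sub>1. f x) - (x\<^sub>1 - x\<^sub>0) / 6 * (f x\<^sub>0 + 4 * f ((x\<^sub>0 + x\<^sub>1) / 2) + f x\<^sub>1)\<bar>
    \<le> (x\<^sub>1 - x\<^sub>0)^4 / 1152 *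
      ((simpson_kernel_moment \<alpha> * A + m * (1 - simpson_kernel_moment \<alpha>) * B) powr (1/q)
       + (simpson_kernel_reflected_moment \<alpha> * A + m * (1 - simpson_kernel_reflected_moment \<alpha>) * B)
           powr (1/q))"
proof (cases "x\<^sub>0 = x\<^sub>1")
  case False
  from simpson_rule_error_peano[OF False f] obtain V\<^sub>1 V\<^sub>2 where
    V\<^sub>1: "((\<lambda>s. simpson_kernel s * f''' (x\<^sub>0 + s * (x\<^sub>1 - x\<^sub>0))) has_integral V\<^sub>1) {0..1/2}" and
    V\<^sub>2: "((\<lambda>s. simpson_kernel (1 - s) * f''' (x\<^sub>0 + s * (x\<^sub>1 - x\<^sub>0))) has_integral V\<^sub>2) {1/2..1}" and
    E: "(LBINT x=x\<^sub>0..x\<^sub>1. f x) - (x\<^sub>1 - x\<^sub>0) / 6 * (f x\<^sub>0 + 4 * f ((x\<^sub>0 + x\<^sub>1) / 2) + f x\<^sub>1)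
          = (x\<^sub>1 - x\<^sub>0)^4 * (V\<^sub>1 - V\<^sub>2)" .
  have "(x\<^sub>1 - x\<^sub>0)^4 * \<bar>V\<^sub>1 - V\<^sub>2\<bar> \<le> (x\<^sub>1 - x\<^sub>0)^4 *
      (((simpson_kernel_moment \<alpha> * A + m * (1 - simpson_kernel_moment \<alpha>) * B) powr (1/q)
       + (simpson_kernel_reflected_moment \<alpha> * A + m * (1 - simpson_kernel_reflected_moment \<alpha>) * B)
           powr (1/q)) / 1152)"
    using simpson_kernel_integrals_bound[OF V\<^sub>1 V\<^sub>2 \<alpha> q f'''_le] by (rule mult_left_mono) simp_all
  then show ?thesis
    unfolding E abs_mult power_abs power_even_abs_numeral[OF even_numeral] by simp
qed simp

lemma alpha_m_convex_on_segment:
  fixes g :: "real \<Rightarrow> real"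
  assumes conv: "alpha_m_convex_on \<alpha> m bs g" and "a \<in> {0..bs}" "b \<in> {0..bs}" and "0 \<le> s" "s < 1"
  shows "g (a + s * (m * b - a)) \<le> (1 - s) powr \<alpha> * g a + m * (1 - (1 - s) powr \<alpha>) * g b"
proof -
  have "1 - s \<in> {0..1}" using assms(4,5) by auto
  with conv assms(2,3) have "g ((1 - s) * a + m * (1 - (1 - s)) * b)
      \<le> (if 1 - s = 0 \<and> \<alpha> = 0 then 1 else (1 - s) powr \<alpha>) * g a
         + m * (1 - (if 1 - s = 0 \<and> \<alpha> = 0 then 1 else (1 - s) powr \<alpha>)) * g b"
    unfolding alpha_m_convex_on_def by blast
  then show ?thesis
    using assms(5) by (simp add: algebra_simps)
qed

theorem theorem5:
  fixes f f1 f2 f3 :: "real \<Rightarrow> real" and bs c d a b \<alpha> m q :: real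
  assumes bs_pos: "bs > 0"
    and interval: "c < 0" "bs < d"
    and d1: "\<And>x. x \<in> {c<..<d} \<Longrightarrow> (f has_real_derivative f1 x) (at x)"
    and d2: "\<And>x. x \<in> {c<..<d} \<Longrightarrow> (f1 has_real_derivative f2 x) (at x)"
    and d3: "\<And>x. x \<in> {c<..<d} \<Longrightarrow> (f2 has_real_derivative f3 x) (at x)"
    and int3: "set_integrable lborel {0..bs} f3"
    and ab: "a \<in> {0..bs}" "b \<in> {0..bs}" "a < b"
    and alpha: "0 \<le> \<alpha>" "\<alpha> \<le> 1"
    and mrange: "0 < m" "m \<le> 1"
    and q: "q \<ge> 1"
    and conv: "alpha_m_convex_on \<alpha> m bs (\<lambda>x. \<bar>f3 x\<bar> powr q)"
  shows "let C = 12 * (\<alpha>^2 + 11 * \<alpha> + 34 - 2 powr (4 + \<alpha>) * (2 - \<alpha>)) /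
                 (2 powr \<alpha> * (1 + \<alpha>) * (2 + \<alpha>) * (3 + \<alpha>) * (4 + \<alpha>));
             K = 2 powr \<alpha> * (3 + \<alpha>) * (4 + \<alpha>)
         in \<bar>(LBINT x=a..m*b. f x) - (m*b - a) / 6 * (f a + 4 * f ((a + m*b) / 2) + f (m*b))\<bar>
            \<le> (m*b - a)^4 / 1152 *
               (((12 * \<bar>f3 a\<bar> powr q + m * (K - 12) * \<bar>f3 b\<bar> powr q) / K) powr (1/q)
                + (C * \<bar>f3 a\<bar> powr q + m * (1 - C) * \<bar>f3 b\<bar> powr q) powr (1/q))"
proof -
  have "m * b \<in> {0..bs}"
    using ab mrange by (auto intro: order_trans[OF mult_left_le_one_le])
  then have segment: "closed_segment a (m * b) \<subseteq> {c<..<d}"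
    using ab interval by (auto simp: closed_segment_eq_real_ivl)
  have error_le: "\<bar>(LBINT x=a..m*b. f x) - (m*b - a) / 6 * (f a + 4 * f ((a + m*b) / 2) + f (m*b))\<bar>
      \<le> (m*b - a)^4 / 1152 *
        ((simpson_kernel_moment \<alpha> * \<bar>f3 a\<bar> powr q
            + m * (1 - simpson_kernel_moment \<alpha>) * \<bar>f3 b\<bar> powr q) powr (1/q)
         + (simpson_kernel_reflected_moment \<alpha> * \<bar>f3 a\<bar> powr q
            + m * (1 - simpson_kernel_reflected_moment \<alpha>) * \<bar>f3 b\<bar> powr q) powr (1/q))"
    using alpha q alpha_m_convex_on_segment[OF conv ab(1,2)]
    by (intro simpson_rule_error_le[OF d1[OF subsetD[OF segment]] d2[OF subsetD[OF segment]]
        d3[OF subsetD[OF segment]]]) auto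
  define K where "K = 2 powr \<alpha> * (3 + \<alpha>) * (4 + \<alpha>)"
  have "0 < K" using alpha by (simp add: K_def)
  then have "(12 * \<bar>f3 a\<bar> powr q + m * (K - 12) * \<bar>f3 b\<bar> powr q) / K
      = simpson_kernel_reflected_moment \<alpha> * \<bar>f3 a\<bar> powr q
        + m * (1 - simpson_kernel_reflected_moment \<alpha>) * \<bar>f3 b\<bar> powr q"
    unfolding simpson_kernel_reflected_moment_def K_def[symmetric] by (simp add: field_simps)
  with error_le show ?thesis
    unfolding Let_def K_def[symmetric] simpson_kernel_moment_def[symmetric] by (simp add: add.commute)
qed

end
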